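(* Let $\mathcal{M}_{\mathbb{P}}=(\mathcal{M},\mathbb{P})$ be an uncertain parametric MDP, $\varphi$ a specification with a fixed threshold $\lambda$, and $\mathcal{U}_N$ a set of $N\ge1$ parameter instantiations sampled independently from $\mathbb{P}$. Let $N_{\neg\varphi}=|\{u\in\mathcal{U}_N:\mathcal{M}[u]\not\models\varphi\}|$ be the number of violating samples. Choose a confidence probability $\beta\in(0,1)$. Define $t^*(N)=0$, and for $k=0,\dots,N-1$ let $t^*(k)$ be the solution $t$ of \[\frac{1-\beta}{N}=\sum_{i=0}^{k}\binom{N}{i}(1-t)^i t^{N-i}.\] Then \[\mathbb{P}^N\Big\{F(\mathcal{M}_{\mathbb{P}},\varphi)\ \ge\ t^*(N_{\neg\varphi})\Big\}\ \ge\ \beta .\]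
   Context: A parametric MDP (pMDP) is $\mathcal{M}=(S,\mathit{Act},s_I,V,\mathcal{P})$ with finite state set $S$, finite action set $\mathit{Act}$, initial state $s_I$, finite parameter set $V$, and transition function $\mathcal{P}:S\times\mathit{Act}\times S\to\mathbb{Q}[V]$. The parameter space $\mathcal{V}_{\mathcal{M}}$ consists of instantiations $u:V\to\mathbb{R}$; $\mathcal{M}[u]$ is the MDP obtained by evaluating the polynomials at $u$, assumed well-defined and graph-preserving (nonzero transitions get values in $(0,1]$). An uncertain pMDP is $\mathcal{M}_{\mathbb{P}}=(\mathcal{M},\mathbb{P})$ with $\mathbb{P}$ a (possibly unknown) probability distribution over $\mathcal{V}_{\mathcal{M}}$. A specification $\varphi$ consists of a measure on MDPs (e.g. maximal/minimal reachability probability, expected reward), a comparison operator in $\{<,\le,\ge,>\}$ and a threshold $\lambda$; $\mathcal{M}[u]\models\varphi$ means the measure's value on $\mathcal{M}[u]$ compares to $\lambda$ as prescribed. The satisfaction probability is $F(\mathcal{M}_{\mathbb{P}},\varphi)=\int_{\mathcal{V}_{\mathcal{M}}}I_\varphi(u)\,d\mathbb{P}(u)$ with $I_\varphi(u)=1$ iff $\mathcal{M}[u]\models\varphi$, else $0$ (assumed measurable). $\mathbb{P}^N$ is the $N$-fold product measure governing $\mathcal{U}_N$. *)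

theory Defs
  imports "HOL-Probability.Probability"
begin

datatype cmp_op = CLt | CLe | CGe | CGt

fun cmp_holds :: "cmp_op \<Rightarrow> ereal \<Rightarrow> ereal \<Rightarrow> bool" where
  "cmp_holds CLt x l = (x < l)"
| "cmp_holds CLe x l = (x \<le> l)"
| "cmp_holds CGe x l = (x \<ge> l)"
| "cmp_holds CGt x l = (x > l)"

text \<open>Parameter instantiations are functions
  'v => real; the parametric transition function maps each triple to a function of the
  instantiation (the polynomial, viewed as a function).\<close>
record ('s, 'a) mdp =
  m_states :: "'s set"
  m_acts :: "'a set"
  m_init :: 's
  m_trans :: "'s \<Rightarrow> 'a \<Rightarrow> 's \<Rightarrow> real"

record ('s, 'a, 'v) pmdp =
  p_states :: "'s set"
  p_acts :: "'a set"
  p_init :: 's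
  p_params :: "'v set"
  p_trans :: "'s \<Rightarrow> 'a \<Rightarrow> 's \<Rightarrow> ('v \<Rightarrow> real) \<Rightarrow> real"

definition instantiate :: "('s, 'a, 'v) pmdp \<Rightarrow> ('v \<Rightarrow> real) \<Rightarrow> ('s, 'a) mdp" where
  "instantiate M u = \<lparr> m_states = p_states M, m_acts = p_acts M, m_init = p_init M,
                        m_trans = (\<lambda>s a s'. p_trans M s a s' u) \<rparr>"

text \<open>A specification: a measure on MDPs (e.g. max/min reachability probability,
  expected reward; values in the extended reals), a comparison operator and a threshold.\<close>
record ('s, 'a) spec =
  sp_measure :: "('s, 'a) mdp \<Rightarrow> ereal"
  sp_cmp :: cmp_op
  sp_threshold :: real

definition models :: "('s, 'a) mdp \<Rightarrow> ('s, 'a) spec \<Rightarrow> bool" where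
  "models D \<phi> = cmp_holds (sp_cmp \<phi>) (sp_measure \<phi> D) (ereal (sp_threshold \<phi>))"

text \<open>Satisfaction probability F(M_P, phi) = integral of the indicator I_phi w.r.t. P.\<close>
definition sat_prob :: "('v \<Rightarrow> real) measure \<Rightarrow> ('s, 'a, 'v) pmdp \<Rightarrow> ('s, 'a) spec \<Rightarrow> real" where
  "sat_prob P M \<phi> = measure P {u \<in> space P. models (instantiate M u) \<phi>}"

definition n_viol :: "('s, 'a, 'v) pmdp \<Rightarrow> ('s, 'a) spec \<Rightarrow> nat \<Rightarrow> (nat \<Rightarrow> ('v \<Rightarrow> real)) \<Rightarrow> nat" where
  "n_viol M \<phi> N U = card {i \<in> {..<N}. \<not> models (instantiate M (U i)) \<phi>}"

definition t_star :: "nat \<Rightarrow> real \<Rightarrow> nat \<Rightarrow> real" where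
  "t_star N \<beta> k = (if k \<ge> N then 0 else
     (THE t. t \<in> {0..1} \<and>
        (1 - \<beta>) / real N = (\<Sum>i\<le>k. real (N choose i) * (1 - t) ^ i * t ^ (N - i))))"

end

theory Submission
  imports Defs
begin

text \<open>
  Write \<open>p\<close> for the satisfaction probability. Each sample violates \<open>\<phi>\<close> independently with
  probability \<open>1 - p\<close>, so the number \<open>K\<close> of violating samples satisfies
  \<open>P(K \<le> k) = H\<^sub>k(p)\<close>, where \<open>H\<^sub>k(t) = \<Sum>i\<le>k. (N choose i) (1 - t)\<^sup>i t\<^sup>N\<^sup>-\<^sup>i\<close>.
  For \<open>k < N\<close>, \<open>H\<^sub>k\<close> has the positive derivative \<open>N (N - 1 choose k) (1 - t)\<^sup>k t\<^sup>N\<^sup>-\<^sup>1\<^sup>-\<^sup>k\<close>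
  on \<open>(0, 1)\<close> and runs from 0 to 1, so \<open>t*(k)\<close> is its unique preimage of \<open>(1 - \<beta>)/N\<close> and
  \<open>p < t*(k)\<close> means \<open>H\<^sub>k(p) < (1 - \<beta>)/N\<close>. Hence the bad event \<open>p < t*(K)\<close> lies in
  \<open>K \<le> k\<^sub>0\<close> for the largest such \<open>k\<^sub>0\<close>, whose probability \<open>H\<^sub>k\<^sub>0(p)\<close> is below
  \<open>(1 - \<beta>)/N \<le> 1 - \<beta>\<close>.
\<close>

definition at_most_failures :: "nat \<Rightarrow> nat \<Rightarrow> real \<Rightarrow> real" where
  "at_most_failures N k t = (\<Sum>i\<le>k. real (N choose i) * (1 - t) ^ i * t ^ (N - i))"

lemma has_real_derivative_at_most_failures:
  assumes "k < N"
  shows "(at_most_failures N k has_real_derivative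
           real N * real (N - 1 choose k) * (1 - t) ^ k * t ^ (N - 1 - k)) (at t)"
  using assms
proof (induction k)
  case 0
  have "at_most_failures N 0 = (\<lambda>t. t ^ N)"
    by (auto simp: at_most_failures_def)
  then show ?case
    by (auto intro!: derivative_eq_intros)
next
  case (Suc k)
  then obtain n where N: "N = Suc k + Suc n"
    by (metis add_Suc_right less_imp_Suc_add)
  have N_pos: "0 < N" and N_minus: "N - Suc k = Suc n"
    using N by simp_all
  have step: "at_most_failures N (Suc k) =
      (\<lambda>t. at_most_failures N k t + real (N choose Suc k) * (1 - t) ^ Suc k * t ^ Suc n)"
    by (auto simp: at_most_failures_def N)
  txt \<open>By the absorption identities the new term's derivative cancels the old derivative
    and leaves the next one.\<close>
  have "N * (N - 1 choose k) = (N choose Suc k) * Suc k"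
    using Suc_times_binomial_eq[of "N - 1" k] by (simp only: Suc_diff_1 [OF N_pos])
  then have absorb_left: "real N * real (N - 1 choose k) = real (N choose Suc k) * real (Suc k)"
    by (simp only: of_nat_mult [symmetric])
  have "N * (N - 1 choose Suc k) = (N choose Suc k) * Suc n"
    using binomial_absorb_comp[of N "Suc k"] N_minus by (metis mult.commute)
  then have absorb_right: "real N * real (N - 1 choose Suc k) = real (N choose Suc k) * real (Suc n)"
    by (simp only: of_nat_mult [symmetric])
  have exps: "N - 1 - k = Suc n" "N - 1 - Suc k = n"
    using N by auto
  have "((\<lambda>t. real (N choose Suc k) * (1 - t) ^ Suc k * t ^ Suc n) has_real_derivative
      real (N choose Suc k) * (real (Suc n) * (1 - t) ^ Suc k * t ^ n - real (Suc k) * (1 - t) ^ k * t ^ Suc n))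
      (at t)"
    by (rule derivative_eq_intros refl)+ (simp add: algebra_simps)
  then have "(at_most_failures N (Suc k) has_real_derivative
      real N * real (N - 1 choose k) * (1 - t) ^ k * t ^ (N - 1 - k) +
      real (N choose Suc k) * (real (Suc n) * (1 - t) ^ Suc k * t ^ n - real (Suc k) * (1 - t) ^ k * t ^ Suc n))
      (at t)"
    unfolding step by (rule DERIV_add[OF Suc.IH[OF Suc_lessD[OF Suc.prems]]])
  moreover have "real N * real (N - 1 choose k) * (1 - t) ^ k * t ^ Suc n +
      real (N choose Suc k) * (real (Suc n) * (1 - t) ^ Suc k * t ^ n - real (Suc k) * (1 - t) ^ k * t ^ Suc n) =
      real N * real (N - 1 choose Suc k) * (1 - t) ^ Suc k * t ^ n"
    unfolding absorb_left absorb_right by (simp add: algebra_simps)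
  ultimately show ?case
    by (simp only: exps)
qed

lemma isCont_at_most_failures: "isCont (at_most_failures N k) t"
  unfolding at_most_failures_def by (intro continuous_intros)

lemma at_most_failures_strict_mono_on:
  assumes "k < N"
  shows "strict_mono_on {0..1} (at_most_failures N k)"
proof (rule strict_mono_onI)
  fix a b :: real
  assume "a \<in> {0..1}" "b \<in> {0..1}" "a < b"
  then show "at_most_failures N k a < at_most_failures N k b"
  proof (intro DERIV_pos_imp_increasing_open[OF \<open>a < b\<close>])
    fix x assume "a < x" "x < b"
    with \<open>a \<in> {0..1}\<close> \<open>b \<in> {0..1}\<close> assms
    have "0 < real N * real (N - 1 choose k) * (1 - x) ^ k * x ^ (N - 1 - k)"
      by (intro mult_pos_pos) auto
    then show "\<exists>y. DERIV (at_most_failures N k) x :> y \<and> 0 < y"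
      using has_real_derivative_at_most_failures[OF assms] by blast
  qed (auto intro!: continuous_at_imp_continuous_on isCont_at_most_failures)
qed

lemma at_most_failures_0: "k < N \<Longrightarrow> at_most_failures N k 0 = 0"
  by (auto simp: at_most_failures_def intro!: sum.neutral)

lemma at_most_failures_1: "at_most_failures N k 1 = 1"
proof -
  have "at_most_failures N k 1 = (\<Sum>i\<in>{0}. real (N choose i) * (1 - 1) ^ i * 1 ^ (N - i))"
    unfolding at_most_failures_def by (rule sum.mono_neutral_right) auto
  then show ?thesis by simp
qed

lemma ex1_at_most_failures_eq:
  assumes "k < N" "c \<in> {0..1}"
  shows "\<exists>!t. t \<in> {0..1} \<and> at_most_failures N k t = c"
proof (rule ex_ex1I)
  show "\<exists>t. t \<in> {0..1} \<and> at_most_failures N k t = c"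
    using IVT[of "at_most_failures N k" 0 c 1] assms
    by (auto simp: at_most_failures_0 at_most_failures_1 isCont_at_most_failures)
qed (use strict_mono_on_eqD[OF at_most_failures_strict_mono_on[OF assms(1)]] in auto)

lemma
  assumes "k < N" "0 \<le> \<beta>" "\<beta> < 1"
  shows t_star_in_unit: "t_star N \<beta> k \<in> {0..1}"
    and at_most_failures_t_star: "at_most_failures N k (t_star N \<beta> k) = (1 - \<beta>) / N"
proof -
  have "(1 - \<beta>) / N \<in> {0..1}"
    using assms by (auto simp: field_simps)
  from theI'[OF ex1_at_most_failures_eq[OF assms(1) this]] assms(1)
  show "t_star N \<beta> k \<in> {0..1}" "at_most_failures N k (t_star N \<beta> k) = (1 - \<beta>) / N"
    by (auto simp: t_star_def at_most_failures_def eq_commute[of "(1 - \<beta>) / N"])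
qed

lemma
  assumes "0 \<le> p" "p < t_star N \<beta> k" "0 \<le> \<beta>" "\<beta> < 1"
  shows less_t_star_imp_less: "k < N"
    and at_most_failures_less_if_less_t_star: "at_most_failures N k p < (1 - \<beta>) / N"
proof -
  show "k < N"
    using assms(1,2) by (cases "k < N") (auto simp: t_star_def)
  note t_star = t_star_in_unit[OF \<open>k < N\<close> assms(3,4)] at_most_failures_t_star[OF \<open>k < N\<close> assms(3,4)]
  have "p \<in> {0..1}"
    using assms(1,2) t_star(1) by simp
  from strict_mono_onD[OF at_most_failures_strict_mono_on[OF \<open>k < N\<close>] this t_star(1) assms(2)]
  show "at_most_failures N k p < (1 - \<beta>) / N"
    unfolding t_star(2) .
qed

lemma sum_subsets_card_le:
  assumes "finite I"
  shows "(\<Sum>S | S \<subseteq> I \<and> card S \<le> k. f (card S)) = (\<Sum>i\<le>k. of_nat (card I choose i) * f i)"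
proof -
  let ?\<S> = "{S. S \<subseteq> I \<and> card S \<le> k}"
  have "(\<Sum>S\<in>?\<S>. f (card S)) = (\<Sum>i\<le>k. \<Sum>S\<in>{S \<in> ?\<S>. card S = i}. f (card S))"
    using assms by (intro sum.group[symmetric]) auto
  also have "\<dots> = (\<Sum>i\<le>k. \<Sum>S | S \<subseteq> I \<and> card S = i. f i)"
    by (intro sum.cong) auto
  finally show ?thesis
    by (simp add: n_subsets[OF assms])
qed

lemma disjoint_family_on_PiE_if:
  assumes "B \<inter> C = {}"
  shows "disjoint_family_on (\<lambda>S. Pi\<^sub>E I (\<lambda>i. if i \<in> S then B else C)) (Pow I)"
  unfolding disjoint_family_on_def
proof (intro ballI impI)
  fix S T assume "S \<in> Pow I" "T \<in> Pow I" "S \<noteq> T"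
  then obtain i where "i \<in> I" "i \<in> S \<longleftrightarrow> i \<notin> T"
    by blast
  with assms show "Pi\<^sub>E I (\<lambda>i. if i \<in> S then B else C) \<inter> Pi\<^sub>E I (\<lambda>i. if i \<in> T then B else C) = {}"
    by (fastforce simp: PiE_iff)
qed

lemma Collect_card_notin_eq_UNION:
  assumes "A \<subseteq> space P"
  shows "{U \<in> space (PiM I (\<lambda>_. P)). Q (card {i \<in> I. U i \<notin> A})} =
    (\<Union>S \<in> {S \<in> Pow I. Q (card S)}. Pi\<^sub>E I (\<lambda>i. if i \<in> S then space P - A else A))"
proof (intro equalityI subsetI)
  fix U assume "U \<in> {U \<in> space (PiM I (\<lambda>_. P)). Q (card {i \<in> I. U i \<notin> A})}"
  then show "U \<in> (\<Union>S \<in> {S \<in> Pow I. Q (card S)}. Pi\<^sub>E I (\<lambda>i. if i \<in> S then space P - A else A))"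
    by (intro UN_I[of "{i \<in> I. U i \<notin> A}"]) (auto simp: space_PiM PiE_iff)
next
  fix U assume "U \<in> (\<Union>S \<in> {S \<in> Pow I. Q (card S)}. Pi\<^sub>E I (\<lambda>i. if i \<in> S then space P - A else A))"
  then obtain S where "S \<subseteq> I" "Q (card S)" and U: "U \<in> Pi\<^sub>E I (\<lambda>i. if i \<in> S then space P - A else A)"
    by blast
  moreover from this have "{i \<in> I. U i \<notin> A} = S"
    by (auto simp: PiE_iff split: if_splits)
  ultimately show "U \<in> {U \<in> space (PiM I (\<lambda>_. P)). Q (card {i \<in> I. U i \<notin> A})}"
    using assms by (auto simp: space_PiM PiE_iff split: if_splits)
qed

context
  fixes P :: "'a measure" and A :: "'a set" and I :: "'i set"
  assumes prob_space_P: "prob_space P" and A: "A \<in> sets P" and finite_I: "finite I"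
begin

interpretation P: prob_space P
  by (fact prob_space_P)

interpretation PiM: finite_product_prob_space "\<lambda>_. P" I
  by unfold_locales (fact finite_I)

lemma measure_PiM_PiE_if:
  assumes "S \<subseteq> I"
  shows "measure (PiM I (\<lambda>_. P)) (Pi\<^sub>E I (\<lambda>i. if i \<in> S then space P - A else A)) =
    (1 - measure P A) ^ card S * measure P A ^ (card I - card S)"
proof -
  have "measure (PiM I (\<lambda>_. P)) (Pi\<^sub>E I (\<lambda>i. if i \<in> S then space P - A else A)) =
      (\<Prod>i\<in>I. measure P (if i \<in> S then space P - A else A))"
    using A by (intro PiM.finite_measure_PiM_emb) simp
  also have "\<dots> = (\<Prod>i\<in>I. if i \<in> S then 1 - measure P A else measure P A)"
    by (intro prod.cong) (simp_all add: P.prob_compl[OF A])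
  also have "\<dots> = (1 - measure P A) ^ card S * measure P A ^ (card I - card S)"
    using assms finite_I by (simp add: prod.If_cases Int_absorb1 Diff_eq[symmetric] card_Diff_subset finite_subset)
  finally show ?thesis .
qed

lemma sets_PiM_Collect_card_notin:
  "{U \<in> space (PiM I (\<lambda>_. P)). Q (card {i \<in> I. U i \<notin> A})} \<in> sets (PiM I (\<lambda>_. P))"
  unfolding Collect_card_notin_eq_UNION[OF sets.sets_into_space[OF A]]
  using A finite_I by (intro sets.finite_UN sets_PiM_I_finite) auto

lemma measure_PiM_card_notin_le:
  "measure (PiM I (\<lambda>_. P)) {U \<in> space (PiM I (\<lambda>_. P)). card {i \<in> I. U i \<notin> A} \<le> k} =
    at_most_failures (card I) k (measure P A)"
proof -
  have "measure (PiM I (\<lambda>_. P)) {U \<in> space (PiM I (\<lambda>_. P)). card {i \<in> I. U i \<notin> A} \<le> k} =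
      (\<Sum>S\<in>{S \<in> Pow I. card S \<le> k}. measure (PiM I (\<lambda>_. P)) (Pi\<^sub>E I (\<lambda>i. if i \<in> S then space P - A else A)))"
    unfolding Collect_card_notin_eq_UNION[OF sets.sets_into_space[OF A], where Q = "\<lambda>n. n \<le> k"]
  proof (rule measure_finite_Union)
    show "disjoint_family_on (\<lambda>S. Pi\<^sub>E I (\<lambda>i. if i \<in> S then space P - A else A)) {S \<in> Pow I. card S \<le> k}"
      by (rule disjoint_family_on_mono[OF _ disjoint_family_on_PiE_if]) auto
  qed (use A finite_I in \<open>auto simp: PiM.emeasure_eq_measure intro!: sets_PiM_I_finite\<close>)
  also have "\<dots> = (\<Sum>S | S \<subseteq> I \<and> card S \<le> k. (1 - measure P A) ^ card S * measure P A ^ (card I - card S))"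
    by (intro sum.cong) (auto simp: measure_PiM_PiE_if)
  also have "\<dots> = at_most_failures (card I) k (measure P A)"
    unfolding sum_subsets_card_le[OF finite_I, where f = "\<lambda>n. (1 - measure P A) ^ n * measure P A ^ (card I - n)"]
    by (simp add: at_most_failures_def mult.assoc)
  finally show ?thesis .
qed

lemma measure_PiM_less_t_star_le:
  assumes "0 \<le> \<beta>" "\<beta> < 1"
  shows "measure (PiM I (\<lambda>_. P))
    {U \<in> space (PiM I (\<lambda>_. P)). measure P A < t_star (card I) \<beta> (card {i \<in> I. U i \<notin> A})} \<le> 1 - \<beta>"
proof (cases "\<exists>k. measure P A < t_star (card I) \<beta> k")
  case False
  then show ?thesis
    using assms by simp
next
  case True
  define ks where "ks = {k. measure P A < t_star (card I) \<beta> k}"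
  have ks_bounds: "k < card I" "at_most_failures (card I) k (measure P A) < (1 - \<beta>) / card I"
    if "k \<in> ks" for k
    using that less_t_star_imp_less[OF measure_nonneg _ assms] at_most_failures_less_if_less_t_star[OF measure_nonneg _ assms]
    by (auto simp: ks_def)
  have "finite ks" "ks \<noteq> {}"
    using ks_bounds(1) True by (auto simp: ks_def intro: finite_subset[of _ "{..<card I}"])
  then have Max_ks: "Max ks \<in> ks" "\<And>k. k \<in> ks \<Longrightarrow> k \<le> Max ks"
    by auto
  have "measure (PiM I (\<lambda>_. P))
      {U \<in> space (PiM I (\<lambda>_. P)). measure P A < t_star (card I) \<beta> (card {i \<in> I. U i \<notin> A})} \<le>
      measure (PiM I (\<lambda>_. P)) {U \<in> space (PiM I (\<lambda>_. P)). card {i \<in> I. U i \<notin> A} \<le> Max ks}"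
    using Max_ks(2) by (intro PiM.finite_measure_mono sets_PiM_Collect_card_notin) (auto simp: ks_def)
  also have "\<dots> = at_most_failures (card I) (Max ks) (measure P A)"
    by (rule measure_PiM_card_notin_le)
  also have "\<dots> < (1 - \<beta>) / card I"
    using ks_bounds(2)[OF Max_ks(1)] .
  also have "\<dots> \<le> 1 - \<beta>"
    using ks_bounds(1)[OF Max_ks(1)] assms by (simp add: divide_le_eq)
  finally show ?thesis
    by simp
qed

end

theorem theorem2:
  fixes P :: "('v \<Rightarrow> real) measure"
    and M :: "('s, 'a, 'v) pmdp"
    and \<phi> :: "('s, 'a) spec"
    and N :: nat and \<beta> :: real
  assumes "prob_space P"
    and "finite (p_states M)" and "finite (p_acts M)" and "finite (p_params M)"
    and "p_init M \<in> p_states M"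
    and "{u \<in> space P. models (instantiate M u) \<phi>} \<in> sets P"
    and "N \<ge> 1"
    and "0 < \<beta>" and "\<beta> < 1"
  shows "measure (PiM {..<N} (\<lambda>_. P))
           {U \<in> space (PiM {..<N} (\<lambda>_. P)).
              sat_prob P M \<phi> \<ge> t_star N \<beta> (n_viol M \<phi> N U)} \<ge> \<beta>"
proof -
  define A where "A = {u \<in> space P. models (instantiate M u) \<phi>}"
  have A: "A \<in> sets P"
    using assms(6) unfolding A_def .
  let ?PM = "PiM {..<N} (\<lambda>_. P)"
  let ?bad = "{U \<in> space ?PM. measure P A < t_star N \<beta> (card {i \<in> {..<N}. U i \<notin> A})}"
  interpret PM: prob_space ?PM
    using \<open>prob_space P\<close> by (rule prob_space_PiM)
  have "n_viol M \<phi> N U = card {i \<in> {..<N}. U i \<notin> A}" if "U \<in> space ?PM" for U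
    using that unfolding n_viol_def A_def by (intro arg_cong[where f = card]) (auto simp: space_PiM)
  then have event_eq: "{U \<in> space ?PM. sat_prob P M \<phi> \<ge> t_star N \<beta> (n_viol M \<phi> N U)} = space ?PM - ?bad"
    by (auto simp: sat_prob_def A_def not_less)
  have "measure ?PM (space ?PM - ?bad) = 1 - measure ?PM ?bad"
    by (intro PM.prob_compl sets_PiM_Collect_card_notin[OF \<open>prob_space P\<close> A finite_lessThan])
  moreover have "measure ?PM ?bad \<le> 1 - \<beta>"
    using measure_PiM_less_t_star_le[OF \<open>prob_space P\<close> A finite_lessThan, of \<beta>] assms(8,9) by simp
  ultimately show ?thesis
    unfolding event_eq by linarith
qed

end
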